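(* Let $K\ge 2$, let $s\in(0,1)$, and let $q_1\ge q_2\ge\cdots\ge q_K>0$ satisfy $\sum_{i=1}^K q_i+s=1$. Let $B_1\ge B_2\ge\cdots$ be the base values of all words arranged in non-increasing order, as defined in the context. Put $\alpha_i=\log_{q_1} q_i$, so that $1=\alpha_1\le\alpha_2\le\cdots\le\alpha_K$, and let $R_0>1$ be the unique positive root of $\sum_{i=1}^K X^{-\alpha_i}=1$. Then there is a constant $b\in(0,1)$ such that for every rank $r\ge 1$, $$\frac{b}{R_0}\,B_r^{\log_{q_1}R_0}\;<\;r\;<\;\frac{R_0}{R_0-1}\,B_r^{\log_{q_1}R_0}.$$ Equivalently, writing $-\beta=1/\log_{q_1}R_0=\log q_1/\log R_0$ (so $\beta>0$ and $\beta$ is the solution of $\sum_{i=1}^K q_i^{1/\beta}=1$), there are constants $0<C_1\le C_2$ with $C_1B_r^{-1/\beta}<r<C_2B_r^{-1/\beta}$ for all $r\ge1$.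
   Context: Monkey model: a keyboard has $K$ letters $L_1,\dots,L_K$ struck independently with probabilities $q_1,\dots,q_K$ and a space character with probability $s$. A word is a finite (possibly empty) string $L_{i_1}\cdots L_{i_n}$ of letters ($n\ge0$) followed by a space; it has probability $q_{i_1}\cdots q_{i_n}s$. Its base value is $B=q_{i_1}\cdots q_{i_n}$ (the empty word has base value $1$). The base values of all finitely long words, listed with multiplicity in non-increasing order with ties broken by alphabetical order, are denoted $B_1=1\ge B_2\ge\cdots$; $r$ is called the rank of $B_r$. *)

theory Defs
  imports Complex_Main
begin

text \<open>Monkey model. Letters are L_1, ..., L_K, encoded by the indices 1..K; a word
  (without its trailing space) is a finite list of letter indices.\<close>

definition words :: "nat \<Rightarrow> nat list set" where
  "words K = {w. set w \<subseteq> {1..K}}"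

definition base :: "(nat \<Rightarrow> real) \<Rightarrow> nat list \<Rightarrow> real" where
  "base q w = prod_list (map q w)"

definition alpha_less :: "nat list \<Rightarrow> nat list \<Rightarrow> bool" where
  "alpha_less v w \<longleftrightarrow> (v, w) \<in> lexord {(a, b). a < b}"

definition word_rank :: "(nat \<Rightarrow> real) \<Rightarrow> nat \<Rightarrow> nat list \<Rightarrow> nat" where
  "word_rank q K w = card {v \<in> words K. base q v > base q w \<or>
                                       (base q v = base q w \<and> alpha_less v w)} + 1"

definition sorted_base :: "(nat \<Rightarrow> real) \<Rightarrow> nat \<Rightarrow> nat \<Rightarrow> real" where
  "sorted_base q K r = base q (THE w. w \<in> words K \<and> word_rank q K w = r)"

end

theory Submission
  imports Defs
begin

text \<open>Put \<open>\<gamma> = -log q_1 R_0\<close>, so that \<open>\<Sum>\<^sub>i q_i powr \<gamma> = 1\<close> and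
  \<open>B powr log q_1 R_0 = B powr -\<gamma>\<close>. Splitting off the first letter of a word, the number
  \<open>N(x)\<close> of words with base value \<open>\<ge> x\<close> satisfies \<open>N(x) = [x \<le> 1] + \<Sum>\<^sub>i N(x / q_i)\<close>, and
  the number \<open>N'(x)\<close> of words with base value \<open>> x\<close> satisfies the same recursion with \<open>[x < 1]\<close>.
  As \<open>\<Sum>\<^sub>i (x / q_i) powr -\<gamma> = x powr -\<gamma>\<close>, induction on the least \<open>n\<close> with \<open>q_1 ^ n < x\<close> gives
  \<open>N(x) \<le> max 0 (x powr -\<gamma> - q_1 powr \<gamma>) / (1 - q_1 powr \<gamma>)\<close> and
  \<open>x powr -\<gamma> \<le> (K - 1) N'(x) + 1\<close>. The word of rank \<open>r\<close> and base value \<open>B\<close> has its \<open>r - 1\<close>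
  predecessors among the words of base value \<open>\<ge> B\<close>, and every word of base value \<open>> B\<close> among
  its predecessors; this sandwiches \<open>r\<close> between multiples of \<open>B powr -\<gamma>\<close>, where
  \<open>1 / (1 - q_1 powr \<gamma>) = R_0 / (R_0 - 1)\<close>.\<close>

lemma alpha_less_irrefl: "\<not> alpha_less v v"
  unfolding alpha_less_def by (rule lexord_irreflexive) auto

lemma alpha_less_trans: "alpha_less u v \<Longrightarrow> alpha_less v w \<Longrightarrow> alpha_less u w"
  unfolding alpha_less_def by (erule lexord_trans) (auto simp: trans_def)

lemma alpha_less_linear: "alpha_less u v \<or> u = v \<or> alpha_less v u"
  unfolding alpha_less_def by (rule lexord_linear) auto

definition precedes :: "(nat \<Rightarrow> real) \<Rightarrow> nat list \<Rightarrow> nat list \<Rightarrow> bool" where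
  "precedes q v w \<longleftrightarrow> base q w < base q v \<or> (base q v = base q w \<and> alpha_less v w)"

lemma precedes_irrefl: "\<not> precedes q v v"
  by (simp add: precedes_def alpha_less_irrefl)

lemma precedes_trans: "precedes q u v \<Longrightarrow> precedes q v w \<Longrightarrow> precedes q u w"
  unfolding precedes_def using alpha_less_trans by force

lemma precedes_linear: "precedes q u v \<or> u = v \<or> precedes q v u"
  unfolding precedes_def using alpha_less_linear by force

lemma word_rank_eq_card_predecessors:
  "word_rank q K w = card {v \<in> words K. precedes q v w} + 1"
  by (simp add: word_rank_def precedes_def)

lemma base_Nil [simp]: "base q [] = 1"
  by (simp add: base_def)

lemma base_Cons [simp]: "base q (i # w) = q i * base q w"
  by (simp add: base_def)

lemma base_replicate [simp]: "base q (replicate n i) = q i ^ n"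
  by (simp add: base_def)

lemma Cons_in_words_iff [simp]: "i # w \<in> words K \<longleftrightarrow> i \<in> {1..K} \<and> w \<in> words K"
  by (auto simp: words_def)

lemma words_base_split:
  "{w \<in> words K. P (base q w)} =
     (if P 1 then {[]} else {}) \<union> (\<Union>i\<in>{1..K}. Cons i ` {w \<in> words K. P (q i * base q w)})"
proof (intro equalityI subsetI)
  fix w assume "w \<in> {w \<in> words K. P (base q w)}"
  then show "w \<in> (if P 1 then {[]} else {}) \<union> (\<Union>i\<in>{1..K}. Cons i ` {w \<in> words K. P (q i * base q w)})"
    by (cases w) auto
qed (auto simp: words_def split: if_splits)

lemma card_words_base_split:
  assumes "\<And>i. i \<in> {1..K} \<Longrightarrow> finite {w \<in> words K. P (q i * base q w)}"
  shows "card {w \<in> words K. P (base q w)} =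
           (if P 1 then 1 else 0) + (\<Sum>i=1..K. card {w \<in> words K. P (q i * base q w)})"
proof -
  have "card (\<Union>i\<in>{1..K}. Cons i ` {w \<in> words K. P (q i * base q w)}) =
          (\<Sum>i=1..K. card (Cons i ` {w \<in> words K. P (q i * base q w)}))"
    using assms by (intro card_UN_disjoint) auto
  also have "\<dots> = (\<Sum>i=1..K. card {w \<in> words K. P (q i * base q w)})"
    by (intro sum.cong refl card_image) auto
  moreover have "finite (\<Union>i\<in>{1..K}. Cons i ` {w \<in> words K. P (q i * base q w)})"
    using assms by blast
  ultimately show ?thesis
    by (subst words_base_split, subst card_Un_disjoint) auto
qed

locale monkey_keyboard =
  fixes K :: nat and q :: "nat \<Rightarrow> real"
  assumes one_le_K: "1 \<le> K"
    and letter_prob_pos: "i \<in> {1..K} \<Longrightarrow> 0 < q i"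
    and letter_prob_le_first: "i \<in> {1..K} \<Longrightarrow> q i \<le> q 1"
    and first_letter_prob_less_1: "q 1 < 1"
begin

lemma first_letter_prob_pos: "0 < q 1"
  using letter_prob_pos one_le_K by simp

lemma base_pos: "w \<in> words K \<Longrightarrow> 0 < base q w"
  by (induction w) (auto intro!: mult_pos_pos letter_prob_pos)

lemma base_le_power_length: "w \<in> words K \<Longrightarrow> base q w \<le> q 1 ^ length w"
proof (induction w)
  case (Cons i w)
  then have "q i \<le> q 1" "0 \<le> base q w" "base q w \<le> q 1 ^ length w"
    using letter_prob_le_first base_pos less_imp_le by auto
  then show ?case using first_letter_prob_pos by (simp add: mult_mono)
qed simp

lemma base_le_1: "w \<in> words K \<Longrightarrow> base q w \<le> 1"
  using base_le_power_length first_letter_prob_pos first_letter_prob_less_1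
  by (meson order_trans less_imp_le power_le_one)

lemma length_le_if_power_less_base:
  assumes "w \<in> words K" "q 1 ^ n < base q w"
  shows "length w \<le> n"
proof (rule ccontr)
  assume "\<not> length w \<le> n"
  then have "q 1 ^ length w \<le> q 1 ^ n"
    using first_letter_prob_pos first_letter_prob_less_1 by (intro power_decreasing) auto
  then show False using base_le_power_length[OF assms(1)] assms(2) by linarith
qed

lemma finite_words_base_ge:
  assumes "0 < x"
  shows "finite {w \<in> words K. x \<le> base q w}"
proof -
  obtain n where n: "q 1 ^ n < x"
    using real_arch_pow_inv assms first_letter_prob_less_1 by blast
  have "{w \<in> words K. x \<le> base q w} \<subseteq> {w. set w \<subseteq> {1..K} \<and> length w \<le> n}"
    using length_le_if_power_less_base n by (force simp: words_def)
  then show ?thesis using finite_lists_length_le finite_subset by blast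
qed

lemma finite_words_base_gt: "0 < x \<Longrightarrow> finite {w \<in> words K. x < base q w}"
  by (rule finite_subset[OF _ finite_words_base_ge]) auto

lemma finite_predecessors:
  assumes "w \<in> words K"
  shows "finite {v \<in> words K. precedes q v w}"
  by (rule finite_subset[OF _ finite_words_base_ge[OF base_pos[OF assms]]])
    (auto simp: precedes_def)

lemma one_le_word_rank: "1 \<le> word_rank q K w"
  by (simp add: word_rank_def)

lemma word_rank_less:
  assumes "v \<in> words K" "w \<in> words K" "precedes q v w"
  shows "word_rank q K v < word_rank q K w"
proof -
  have "{u \<in> words K. precedes q u v} \<subset> {u \<in> words K. precedes q u w}"
    using assms precedes_trans precedes_irrefl by blast
  then show ?thesis
    unfolding word_rank_eq_card_predecessors
    using finite_predecessors[OF assms(2)] by (simp add: psubset_card_mono)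
qed

lemma inj_on_word_rank: "inj_on (word_rank q K) (words K)"
  by (intro inj_onI) (metis precedes_linear word_rank_less less_irrefl)

text \<open>The ranks are exactly \<open>1, 2, 3, \<dots>\<close>: the predecessors of a word of rank \<open>R\<close> have
  \<open>R - 1\<close> distinct ranks below \<open>R\<close>.\<close>

lemma word_rank_image_predecessors:
  assumes "w \<in> words K"
  shows "word_rank q K ` {v \<in> words K. precedes q v w} = {1..<word_rank q K w}"
proof (rule card_subset_eq)
  show "word_rank q K ` {v \<in> words K. precedes q v w} \<subseteq> {1..<word_rank q K w}"
    using word_rank_less[OF _ assms] one_le_word_rank by auto
  have "inj_on (word_rank q K) {v \<in> words K. precedes q v w}"
    using inj_on_word_rank by (rule inj_on_subset) auto
  then show "card (word_rank q K ` {v \<in> words K. precedes q v w}) = card {1..<word_rank q K w}"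
    by (simp add: card_image word_rank_eq_card_predecessors[of _ _ w])
qed simp

lemma ex_word_rank:
  assumes "1 \<le> r"
  shows "\<exists>w\<in>words K. word_rank q K w = r"
proof -
  define w where "w = replicate r (1::nat)"
  have w: "w \<in> words K" using one_le_K by (auto simp: w_def words_def)
  have "(\<lambda>j. replicate j 1) ` {..<r} \<subseteq> {v \<in> words K. precedes q v w}"
    using one_le_K first_letter_prob_pos first_letter_prob_less_1
    by (auto simp: w_def words_def precedes_def intro: power_strict_decreasing)
  then have "card ((\<lambda>j. replicate j (1::nat)) ` {..<r}) \<le> card {v \<in> words K. precedes q v w}"
    by (intro card_mono finite_predecessors w)
  moreover have "card ((\<lambda>j. replicate j (1::nat)) ` {..<r}) = r"
    by (subst card_image) (auto simp: inj_on_def)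
  ultimately have "r \<in> {1..<word_rank q K w}"
    using assms by (simp add: word_rank_eq_card_predecessors)
  then have "r \<in> word_rank q K ` {v \<in> words K. precedes q v w}"
    using word_rank_image_predecessors[OF w] by simp
  then show ?thesis by auto
qed

lemma sorted_base_word_rank:
  assumes "w \<in> words K"
  shows "sorted_base q K (word_rank q K w) = base q w"
proof -
  have "(THE v. v \<in> words K \<and> word_rank q K v = word_rank q K w) = w"
    using assms inj_on_word_rank by (intro the_equality) (auto dest: inj_onD)
  then show ?thesis by (simp add: sorted_base_def)
qed

lemma card_words_base_ge_split:
  assumes "0 < x"
  shows "card {w \<in> words K. x \<le> base q w} =
           (if x \<le> 1 then 1 else 0) + (\<Sum>i=1..K. card {w \<in> words K. x / q i \<le> base q w})"
proof -
  have scaled: "{w \<in> words K. x \<le> q i * base q w} = {w \<in> words K. x / q i \<le> base q w}"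
    if "i \<in> {1..K}" for i
    using letter_prob_pos[OF that] by (auto simp: pos_divide_le_eq mult.commute)
  have "card {w \<in> words K. x \<le> base q w} =
          (if x \<le> 1 then 1 else 0) + (\<Sum>i=1..K. card {w \<in> words K. x \<le> q i * base q w})"
    using assms letter_prob_pos by (intro card_words_base_split) (simp add: scaled finite_words_base_ge)
  also have "\<dots> = (if x \<le> 1 then 1 else 0) + (\<Sum>i=1..K. card {w \<in> words K. x / q i \<le> base q w})"
    using scaled by simp
  finally show ?thesis .
qed

lemma card_words_base_gt_split:
  assumes "0 < x"
  shows "card {w \<in> words K. x < base q w} =
           (if x < 1 then 1 else 0) + (\<Sum>i=1..K. card {w \<in> words K. x / q i < base q w})"
proof -
  have scaled: "{w \<in> words K. x < q i * base q w} = {w \<in> words K. x / q i < base q w}"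
    if "i \<in> {1..K}" for i
    using letter_prob_pos[OF that] by (auto simp: pos_divide_less_eq mult.commute)
  have "card {w \<in> words K. x < base q w} =
          (if x < 1 then 1 else 0) + (\<Sum>i=1..K. card {w \<in> words K. x < q i * base q w})"
    using assms letter_prob_pos by (intro card_words_base_split) (simp add: scaled finite_words_base_gt)
  also have "\<dots> = (if x < 1 then 1 else 0) + (\<Sum>i=1..K. card {w \<in> words K. x / q i < base q w})"
    using scaled by simp
  finally show ?thesis .
qed

lemma power_Suc_less_imp_less_divide:
  assumes "q 1 ^ Suc n < x" "i \<in> {1..K}"
  shows "q 1 ^ n < x / q i"
proof -
  have "0 < x" using assms(1) first_letter_prob_pos by (meson less_trans zero_less_power)
  have "q 1 ^ n < x / q 1"
    using assms(1) first_letter_prob_pos by (simp add: pos_less_divide_eq mult.commute)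
  also have "\<dots> \<le> x / q i"
    using \<open>0 < x\<close> assms(2) letter_prob_pos letter_prob_le_first
    by (intro divide_left_mono) (auto intro: less_imp_le)
  finally show ?thesis .
qed

lemma words_base_ge_empty: "1 < x \<Longrightarrow> {w \<in> words K. x \<le> base q w} = {}"
  using base_le_1 by fastforce

end

lemma max_0_diff_le:
  fixes a c t :: real
  assumes "1 \<le> a" "0 \<le> t" "t \<le> c"
  shows "max 0 (a * t - c) \<le> (a - 1) * t"
proof -
  have "0 \<le> (a - 1) * t" using assms by simp
  moreover have "a * t - c \<le> (a - 1) * t" using assms by (simp add: algebra_simps)
  ultimately show ?thesis by simp
qed

lemma divide_powr_neg:
  fixes x y \<gamma> :: real
  assumes "0 < x" "0 < y"
  shows "(x / y) powr - \<gamma> = x powr - \<gamma> * y powr \<gamma>"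
  using assms by (simp add: powr_divide powr_minus_divide)

locale monkey_keyboard_exponent = monkey_keyboard +
  fixes \<gamma> :: real
  assumes exponent_pos: "0 < \<gamma>"
    and sum_powr_exponent: "(\<Sum>i=1..K. q i powr \<gamma>) = 1"
begin

lemma first_letter_powr_less_1: "q 1 powr \<gamma> < 1"
  using powr_less_mono2[OF exponent_pos _ first_letter_prob_less_1] first_letter_prob_pos by simp

lemma letter_powr_le_first: "i \<in> {1..K} \<Longrightarrow> q i powr \<gamma> \<le> q 1 powr \<gamma>"
  using letter_prob_pos letter_prob_le_first exponent_pos by (intro powr_mono2) (auto intro: less_imp_le)

lemma two_le_K: "2 \<le> K"
proof (rule ccontr)
  assume "\<not> 2 \<le> K"
  then have "K = 1" using one_le_K by simp
  then show False using sum_powr_exponent first_letter_powr_less_1 by simp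
qed

lemma card_words_base_ge_le:
  assumes "0 < x"
  shows "real (card {w \<in> words K. x \<le> base q w})
           \<le> max 0 (x powr - \<gamma> - q 1 powr \<gamma>) / (1 - q 1 powr \<gamma>)"
proof -
  let ?c = "q 1 powr \<gamma>"
  have c: "0 < 1 - ?c" using first_letter_powr_less_1 by simp
  obtain n where "q 1 ^ n < x"
    using real_arch_pow_inv assms first_letter_prob_less_1 by blast
  then show ?thesis using assms
  proof (induction n arbitrary: x)
    case 0
    then show ?case using c by (simp add: words_base_ge_empty)
  next
    case (Suc n)
    show ?case
    proof (cases "1 < x")
      case True
      then show ?thesis using c by (simp add: words_base_ge_empty)
    next
      case False
      let ?a = "x powr - \<gamma>"
      have a: "1 \<le> ?a" using False Suc.prems(2) exponent_pos
        by (simp add: powr_minus one_le_inverse_iff powr_le1)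
      have "real (card {w \<in> words K. x \<le> base q w})
              = 1 + (\<Sum>i=1..K. real (card {w \<in> words K. x / q i \<le> base q w}))"
        using card_words_base_ge_split[OF Suc.prems(2)] False by simp
      also have "\<dots> \<le> 1 + (\<Sum>i=1..K. (?a - 1) * q i powr \<gamma> / (1 - ?c))"
      proof (intro add_left_mono sum_mono)
        fix i assume i: "i \<in> {1..K}"
        have "real (card {w \<in> words K. x / q i \<le> base q w})
                \<le> max 0 (?a * q i powr \<gamma> - ?c) / (1 - ?c)"
          using Suc.IH[OF power_Suc_less_imp_less_divide[OF Suc.prems(1) i]]
            Suc.prems(2) letter_prob_pos[OF i] by (simp add: divide_powr_neg)
        also have "\<dots> \<le> (?a - 1) * q i powr \<gamma> / (1 - ?c)"
          using max_0_diff_le[OF a _ letter_powr_le_first[OF i]] c by (intro divide_right_mono) auto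
        finally show "real (card {w \<in> words K. x / q i \<le> base q w}) \<le> (?a - 1) * q i powr \<gamma> / (1 - ?c)" .
      qed
      also have "\<dots> = 1 + (?a - 1) / (1 - ?c)"
        using sum_powr_exponent by (simp add: sum_divide_distrib[symmetric] sum_distrib_left[symmetric])
      also have "\<dots> = max 0 (?a - ?c) / (1 - ?c)"
        using a c first_letter_powr_less_1 by (simp add: field_simps)
      finally show ?thesis .
    qed
  qed
qed

lemma powr_le_card_words_base_gt:
  assumes "0 < y"
  shows "y powr - \<gamma> \<le> (real K - 1) * real (card {w \<in> words K. y < base q w}) + 1"
proof -
  have small: "y powr - \<gamma> \<le> 1" if "1 \<le> y" for y :: real
    using that exponent_pos by (simp add: powr_minus inverse_le_1_iff ge_one_powr_ge_zero)
  have K: "0 \<le> real K - 1" using one_le_K by simp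
  obtain n where "q 1 ^ n < y"
    using real_arch_pow_inv assms first_letter_prob_less_1 by blast
  then show ?thesis using assms
  proof (induction n arbitrary: y)
    case 0
    then show ?case using small K by (simp add: add_increasing)
  next
    case (Suc n)
    show ?case
    proof (cases "1 \<le> y")
      case True
      then show ?thesis using small K by (simp add: add_increasing)
    next
      case False
      let ?M = "\<lambda>i. real (card {w \<in> words K. y / q i < base q w})"
      have "y powr - \<gamma> = (\<Sum>i=1..K. y powr - \<gamma> * q i powr \<gamma>)"
        using sum_powr_exponent by (simp add: sum_distrib_left[symmetric])
      also have "\<dots> = (\<Sum>i=1..K. (y / q i) powr - \<gamma>)"
        using Suc.prems(2) letter_prob_pos by (intro sum.cong) (simp_all add: divide_powr_neg)
      also have "\<dots> \<le> (\<Sum>i=1..K. (real K - 1) * ?M i + 1)"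
        using Suc.IH power_Suc_less_imp_less_divide[OF Suc.prems(1)] Suc.prems(2) letter_prob_pos
        by (intro sum_mono) simp
      also have "\<dots> = (real K - 1) * (\<Sum>i=1..K. ?M i) + real K"
        by (simp add: sum.distrib sum_distrib_left)
      also have "\<dots> = (real K - 1) * (1 + (\<Sum>i=1..K. ?M i)) + 1"
        by (simp add: algebra_simps)
      also have "1 + (\<Sum>i=1..K. ?M i) = real (card {w \<in> words K. y < base q w})"
        using card_words_base_gt_split[OF Suc.prems(2)] False by simp
      finally show ?thesis .
    qed
  qed
qed

lemma word_rank_less_powr:
  assumes "w \<in> words K"
  shows "real (word_rank q K w) < base q w powr - \<gamma> / (1 - q 1 powr \<gamma>)"
proof -
  let ?B = "base q w"
  have B: "0 < ?B" "?B \<le> 1" using base_pos base_le_1 assms by auto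
  have "insert w {v \<in> words K. precedes q v w} \<subseteq> {v \<in> words K. ?B \<le> base q v}"
    using assms by (auto simp: precedes_def)
  then have "card (insert w {v \<in> words K. precedes q v w}) \<le> card {v \<in> words K. ?B \<le> base q v}"
    using finite_words_base_ge[OF B(1)] by (rule card_mono[rotated])
  then have "real (word_rank q K w) \<le> real (card {v \<in> words K. ?B \<le> base q v})"
    using finite_predecessors[OF assms] precedes_irrefl
    by (simp add: word_rank_eq_card_predecessors)
  also have "\<dots> \<le> max 0 (?B powr - \<gamma> - q 1 powr \<gamma>) / (1 - q 1 powr \<gamma>)"
    by (rule card_words_base_ge_le[OF B(1)])
  also have "\<dots> < ?B powr - \<gamma> / (1 - q 1 powr \<gamma>)"
    using B first_letter_powr_less_1 first_letter_prob_pos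
    by (intro divide_strict_right_mono) auto
  finally show ?thesis .
qed

lemma powr_le_word_rank:
  assumes "w \<in> words K"
  shows "base q w powr - \<gamma> \<le> (real K - 1) * real (word_rank q K w)"
proof -
  let ?B = "base q w"
  have "{v \<in> words K. ?B < base q v} \<subseteq> {v \<in> words K. precedes q v w}"
    by (auto simp: precedes_def)
  then have "card {v \<in> words K. ?B < base q v} + 1 \<le> word_rank q K w"
    unfolding word_rank_eq_card_predecessors
    using finite_predecessors[OF assms] by (simp add: card_mono)
  then have M: "real (card {v \<in> words K. ?B < base q v}) + 1 \<le> real (word_rank q K w)"
    by linarith
  have K: "1 \<le> real K - 1" using two_le_K by simp
  have "base q w powr - \<gamma> \<le> (real K - 1) * real (card {v \<in> words K. ?B < base q v}) + 1"
    using powr_le_card_words_base_gt[OF base_pos[OF assms]] .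
  also have "\<dots> \<le> (real K - 1) * (real (card {v \<in> words K. ?B < base q v}) + 1)"
    using K by (simp add: algebra_simps)
  also have "\<dots> \<le> (real K - 1) * real (word_rank q K w)"
    using M K by (intro mult_left_mono) auto
  finally show ?thesis .
qed

lemma base_powr_div_card_less_word_rank:
  assumes "w \<in> words K"
  shows "base q w powr - \<gamma> / real K < real (word_rank q K w)"
proof -
  have "base q w powr - \<gamma> / real K < base q w powr - \<gamma> / (real K - 1)"
    using two_le_K base_pos[OF assms] by (intro divide_strict_left_mono) auto
  also have "\<dots> \<le> real (word_rank q K w)"
    using powr_le_word_rank[OF assms] two_le_K by (simp add: divide_le_eq mult.commute)
  finally show ?thesis .
qed

end

context monkey_keyboard
begin

lemma monkey_keyboard_exponent_log_root:
  assumes "2 \<le> K" "0 < R0" "(\<Sum>i=1..K. R0 powr (- log (q 1) (q i))) = 1"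
  shows "monkey_keyboard_exponent K q (- log (q 1) R0)"
proof unfold_locales
  let ?\<gamma> = "- log (q 1) R0"
  have "R0 powr (- log (q 1) (q i)) = q i powr ?\<gamma>" if "i \<in> {1..K}" for i
    using letter_prob_pos[OF that] assms(2) by (simp add: powr_def log_def field_simps)
  then show sum_powr: "(\<Sum>i=1..K. q i powr ?\<gamma>) = 1"
    using assms(3) by simp
  show "0 < ?\<gamma>"
  proof (rule ccontr)
    assume "\<not> 0 < ?\<gamma>"
    have "1 \<le> q i powr ?\<gamma>" if "i \<in> {1..K}" for i
    proof -
      have "q i \<le> 1" using letter_prob_le_first[OF that] first_letter_prob_less_1 by simp
      then show ?thesis
        using powr_mono2'[of ?\<gamma> "q i" 1] letter_prob_pos[OF that] \<open>\<not> 0 < ?\<gamma>\<close> by simp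
    qed
    then have "(\<Sum>i=1..K. 1) \<le> (\<Sum>i=1..K. q i powr ?\<gamma>)"
      by (intro sum_mono)
    then show False using sum_powr assms(1) by simp
  qed
qed

end

theorem mainTheorem1:
  fixes K :: nat and q :: "nat \<Rightarrow> real" and s R0 :: real
  assumes "K \<ge> 2"
    and "0 < s" and "s < 1"
    and "\<And>i j. 1 \<le> i \<Longrightarrow> i \<le> j \<Longrightarrow> j \<le> K \<Longrightarrow> q j \<le> q i"
    and "\<And>i. 1 \<le> i \<Longrightarrow> i \<le> K \<Longrightarrow> q i > 0"
    and "(\<Sum>i=1..K. q i) + s = 1"
    and "R0 > 0"
    and "(\<Sum>i=1..K. R0 powr (- log (q 1) (q i))) = 1"
  shows "\<exists>b. 0 < b \<and> b < 1 \<and>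
           (\<forall>r::nat. r \<ge> 1 \<longrightarrow>
              b / R0 * sorted_base q K r powr (log (q 1) R0) < real r \<and>
              real r < R0 / (R0 - 1) * sorted_base q K r powr (log (q 1) R0))"
proof -
  have letter_pos: "0 < q i" if "i \<in> {1..K}" for i using assms(5) that by simp
  have letter_le_first: "q i \<le> q 1" if "i \<in> {1..K}" for i using assms(4) that by simp
  have "q 1 \<le> (\<Sum>i=1..K. q i)"
    using assms(1) letter_pos by (intro member_le_sum) (auto intro: less_imp_le)
  then interpret monkey_keyboard K q
    using assms(1,2,6) letter_pos letter_le_first by unfold_locales auto
  define \<gamma> where "\<gamma> = - log (q 1) R0"
  interpret monkey_keyboard_exponent K q \<gamma>
    unfolding \<gamma>_def by (rule monkey_keyboard_exponent_log_root[OF assms(1,7,8)])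
  have first_powr: "q 1 powr \<gamma> = 1 / R0"
    using first_letter_prob_pos first_letter_prob_less_1 assms(7)
    by (simp add: \<gamma>_def powr_minus_divide)
  have "1 < R0"
    using first_letter_powr_less_1 assms(7) unfolding first_powr by (simp add: divide_less_eq)
  show ?thesis
  proof (intro exI[of _ "1 / real K"] conjI allI impI)
    fix r :: nat assume "1 \<le> r"
    then obtain w where w: "w \<in> words K" "word_rank q K w = r" using ex_word_rank by blast
    have "sorted_base q K r powr log (q 1) R0 = base q w powr - \<gamma>"
      using sorted_base_word_rank[OF w(1)] w(2) by (simp add: \<gamma>_def)
    moreover have "1 / real K / R0 * base q w powr - \<gamma> < base q w powr - \<gamma> / real K"
      using \<open>1 < R0\<close> two_le_K base_pos[OF w(1)] by (simp add: field_simps)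
    moreover have "real r < R0 / (R0 - 1) * base q w powr - \<gamma>"
      using word_rank_less_powr[OF w(1)] w(2) \<open>1 < R0\<close> unfolding first_powr by (simp add: field_simps)
    ultimately show "1 / real K / R0 * sorted_base q K r powr log (q 1) R0 < real r"
      "real r < R0 / (R0 - 1) * sorted_base q K r powr log (q 1) R0"
      using base_powr_div_card_less_word_rank[OF w(1)] w(2) by simp_all
  qed (use two_le_K in auto)
qed

end
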